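(* Let $G$ be a finite connected graph with $\operatorname{diam}(G)\ge 2\operatorname{rad}(G)-1$. Then for any diametral pair of vertices $x,y$ (i.e. $d(x,y)=\operatorname{diam}(G)$), the set $\{x,y\}$ is a minimum radius certificate of $G$. Furthermore, $\operatorname{rad}(G)=\lfloor\frac{d(x,y)+1}{2}\rfloor$.
   Context: $d$ shortest-path distance, $e(v)=\max_u d(v,u)$, $\operatorname{rad}(G)=\min_v e(v)$, $\operatorname{diam}(G)=\max_v e(v)$. A radius certificate is a set $L$ of vertices such that every vertex $u$ has some $z\in L$ with $d(u,z)\ge\operatorname{rad}(G)$; a minimum one is one of smallest cardinality. *)

theory Defs
  imports Main
begin

definition simple_graph :: "'a set \<Rightarrow> ('a \<Rightarrow> 'a \<Rightarrow> bool) \<Rightarrow> bool" where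
  "simple_graph V E \<longleftrightarrow> finite V \<and>
     (\<forall>u v. E u v \<longrightarrow> u \<in> V \<and> v \<in> V \<and> u \<noteq> v \<and> E v u)"

definition is_walk :: "'a set \<Rightarrow> ('a \<Rightarrow> 'a \<Rightarrow> bool) \<Rightarrow> 'a list \<Rightarrow> bool" where
  "is_walk V E p \<longleftrightarrow> p \<noteq> [] \<and> set p \<subseteq> V \<and> (\<forall>i. Suc i < length p \<longrightarrow> E (p ! i) (p ! Suc i))"

definition walk_between :: "'a set \<Rightarrow> ('a \<Rightarrow> 'a \<Rightarrow> bool) \<Rightarrow> 'a \<Rightarrow> 'a \<Rightarrow> 'a list \<Rightarrow> bool" where
  "walk_between V E u v p \<longleftrightarrow> is_walk V E p \<and> hd p = u \<and> last p = v"

definition connected_graph :: "'a set \<Rightarrow> ('a \<Rightarrow> 'a \<Rightarrow> bool) \<Rightarrow> bool" where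
  "connected_graph V E \<longleftrightarrow> simple_graph V E \<and> V \<noteq> {} \<and>
     (\<forall>u\<in>V. \<forall>v\<in>V. \<exists>p. walk_between V E u v p)"

definition dist :: "'a set \<Rightarrow> ('a \<Rightarrow> 'a \<Rightarrow> bool) \<Rightarrow> 'a \<Rightarrow> 'a \<Rightarrow> nat" where
  "dist V E u v = (LEAST n. \<exists>p. walk_between V E u v p \<and> length p = Suc n)"

definition ecc :: "'a set \<Rightarrow> ('a \<Rightarrow> 'a \<Rightarrow> bool) \<Rightarrow> 'a \<Rightarrow> nat" where
  "ecc V E v = Max ((\<lambda>u. dist V E v u) ` V)"

definition rad :: "'a set \<Rightarrow> ('a \<Rightarrow> 'a \<Rightarrow> bool) \<Rightarrow> nat" where
  "rad V E = Min (ecc V E ` V)"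

definition diam :: "'a set \<Rightarrow> ('a \<Rightarrow> 'a \<Rightarrow> bool) \<Rightarrow> nat" where
  "diam V E = Max (ecc V E ` V)"

definition radius_certificate :: "'a set \<Rightarrow> ('a \<Rightarrow> 'a \<Rightarrow> bool) \<Rightarrow> 'a set \<Rightarrow> bool" where
  "radius_certificate V E L \<longleftrightarrow> L \<subseteq> V \<and> (\<forall>u\<in>V. \<exists>z\<in>L. dist V E u z \<ge> rad V E)"

definition min_radius_certificate :: "'a set \<Rightarrow> ('a \<Rightarrow> 'a \<Rightarrow> bool) \<Rightarrow> 'a set \<Rightarrow> bool" where
  "min_radius_certificate V E L \<longleftrightarrow> radius_certificate V E L \<and>
     (\<forall>L'. radius_certificate V E L' \<longrightarrow> card L \<le> card L')"

end

theory Submission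
  imports Defs
begin

(* Let c be a central vertex, e(c) = rad G = r.  The triangle inequality through c gives
   d(x,y) <= 2r, so the hypothesis pins d(x,y) to 2r-1 or 2r, i.e. r = floor((d(x,y)+1)/2).
   For every vertex u, d(u,x) + d(u,y) >= d(x,y) >= 2r-1, so u is at distance at least r from
   x or from y: {x,y} is a radius certificate.  No single vertex w is one when r > 0, because
   d(w,w) = 0, and r > 0 as soon as x <> y since d(x,y) <= 2r. *)

lemma is_walk_iff_successively:
  "is_walk V E p \<longleftrightarrow> p \<noteq> [] \<and> set p \<subseteq> V \<and> successively E p"
  unfolding is_walk_def successively_conv_nth by blast

lemma walk_between_append_tl:
  assumes "walk_between V E u v p" "walk_between V E v w q"
  shows "walk_between V E u w (p @ tl q)"
proof -
  obtain q' where q: "q = v # q'" using assms(2) unfolding walk_between_def is_walk_def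
    by (cases q) auto
  have p: "p \<noteq> []" "set p \<subseteq> V" "successively E p" "hd p = u" "last p = v"
    using assms(1) by (auto simp: walk_between_def is_walk_iff_successively)
  have q': "set q' \<subseteq> V" "successively E (v # q')" "last (v # q') = w"
    using assms(2) by (auto simp: q walk_between_def is_walk_iff_successively)
  have "successively E (p @ q')"
    using p q' by (auto simp: successively_append_iff successively_Cons)
  moreover have "last (p @ q') = w" using p(5) q'(3) by (cases q') auto
  ultimately show ?thesis using p q' by (simp add: q walk_between_def is_walk_iff_successively)
qed

lemma walk_between_rev:
  assumes "simple_graph V E" "walk_between V E u v p"
  shows "walk_between V E v u (rev p)"
proof -
  have "successively (\<lambda>a b. E b a) p"
    using assms by (auto simp: simple_graph_def walk_between_def is_walk_iff_successively
        elim: successively_mono)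
  then show ?thesis using assms(2) by (simp add: walk_between_def is_walk_iff_successively hd_rev last_rev)
qed

lemma dist_le_walk_length:
  assumes "walk_between V E u v p"
  shows "dist V E u v \<le> length p - 1"
proof -
  have "p \<noteq> []" using assms unfolding walk_between_def is_walk_def by auto
  then have "walk_between V E u v p \<and> length p = Suc (length p - 1)" using assms by auto
  then show ?thesis unfolding dist_def by (intro Least_le) blast
qed

lemma shortest_walk_exists:
  assumes "connected_graph V E" "u \<in> V" "v \<in> V"
  obtains p where "walk_between V E u v p" "length p = Suc (dist V E u v)"
proof -
  obtain p where p: "walk_between V E u v p" using assms unfolding connected_graph_def by blast
  then have "length p = Suc (length p - 1)" unfolding walk_between_def is_walk_def by auto
  with p have "\<exists>n p. walk_between V E u v p \<and> length p = Suc n" by blast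
  from LeastI_ex[OF this] show ?thesis using that unfolding dist_def by blast
qed

lemma dist_self: "w \<in> V \<Longrightarrow> dist V E w w = 0"
  using dist_le_walk_length[of V E w w "[w]"] by (simp add: walk_between_def is_walk_def)

lemma dist_eq_0_imp_eq:
  assumes "connected_graph V E" "u \<in> V" "v \<in> V" "dist V E u v = 0"
  shows "u = v"
proof -
  obtain p where "walk_between V E u v p" "length p = 1"
    using shortest_walk_exists[OF assms(1-3)] assms(4) by auto
  then show ?thesis unfolding walk_between_def by (cases p) auto
qed

lemma dist_triangle:
  assumes "connected_graph V E" "u \<in> V" "v \<in> V" "w \<in> V"
  shows "dist V E u w \<le> dist V E u v + dist V E v w"
proof -
  obtain p where p: "walk_between V E u v p" "length p = Suc (dist V E u v)"
    using shortest_walk_exists[OF assms(1-3)] .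
  obtain q where q: "walk_between V E v w q" "length q = Suc (dist V E v w)"
    using shortest_walk_exists[OF assms(1,3,4)] .
  show ?thesis
    using dist_le_walk_length[OF walk_between_append_tl[OF p(1) q(1)]] p(2) q(2) by simp
qed

lemma dist_commute:
  assumes "connected_graph V E" "u \<in> V" "v \<in> V"
  shows "dist V E u v = dist V E v u"
proof -
  have "dist V E b a \<le> dist V E a b" if ab: "a \<in> V" "b \<in> V" for a b
  proof -
    obtain p where "walk_between V E a b p" "length p = Suc (dist V E a b)"
      using shortest_walk_exists[OF assms(1) ab] .
    then show ?thesis
      using dist_le_walk_length[OF walk_between_rev] assms(1) by (fastforce simp: connected_graph_def)
  qed
  with assms show ?thesis by (meson le_antisym)
qed

lemma center_exists:
  assumes "connected_graph V E"
  obtains c where "c \<in> V" "\<And>u. u \<in> V \<Longrightarrow> dist V E c u \<le> rad V E"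
proof -
  have fin: "finite V" and ne: "V \<noteq> {}"
    using assms unfolding connected_graph_def simple_graph_def by auto
  then have "rad V E \<in> ecc V E ` V" unfolding rad_def by (intro Min_in) auto
  then obtain c where c: "c \<in> V" "ecc V E c = rad V E" by auto
  have "dist V E c u \<le> rad V E" if "u \<in> V" for u
    using fin that c(2) unfolding ecc_def by (metis Max_ge finite_imageI image_eqI)
  with c(1) show ?thesis using that by blast
qed

lemma dist_le_twice_rad:
  assumes "connected_graph V E" "u \<in> V" "v \<in> V"
  shows "dist V E u v \<le> 2 * rad V E"
proof -
  obtain c where c: "c \<in> V" "\<And>w. w \<in> V \<Longrightarrow> dist V E c w \<le> rad V E"
    using center_exists[OF assms(1)] by blast
  show ?thesis
    using dist_triangle[OF assms(1,2) c(1) assms(3)] dist_commute[OF assms(1,2) c(1)]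
      c(2)[OF assms(2)] c(2)[OF assms(3)] by linarith
qed

lemma radius_certificate_pair:
  assumes "connected_graph V E" "x \<in> V" "y \<in> V" "2 * rad V E \<le> dist V E x y + 1"
  shows "radius_certificate V E {x, y}"
  unfolding radius_certificate_def
proof (intro conjI ballI)
  show "{x, y} \<subseteq> V" using assms by auto
  fix u assume "u \<in> V"
  then have "dist V E x y \<le> dist V E u x + dist V E u y"
    using dist_triangle[OF assms(1,2) \<open>u \<in> V\<close> assms(3)] dist_commute[OF assms(1,2) \<open>u \<in> V\<close>]
    by linarith
  then show "\<exists>z\<in>{x, y}. rad V E \<le> dist V E u z" using assms(4) by auto
qed

lemma radius_certificate_nonempty:
  assumes "connected_graph V E" "radius_certificate V E L"
  shows "L \<noteq> {}"
  using assms unfolding connected_graph_def radius_certificate_def by blast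

lemma radius_certificate_not_singleton:
  assumes "radius_certificate V E L" "0 < rad V E"
  shows "L \<noteq> {w}"
proof
  assume "L = {w}"
  with assms(1) have "w \<in> V" "\<forall>u\<in>V. rad V E \<le> dist V E u w"
    unfolding radius_certificate_def by auto
  then show False using assms(2) dist_self[of w V E] by fastforce
qed

lemma card_pair_le_radius_certificate:
  assumes "connected_graph V E" "x \<in> V" "y \<in> V" "radius_certificate V E L"
  shows "card {x, y} \<le> card L"
proof -
  have "finite L" using assms(1,4) finite_subset
    unfolding connected_graph_def simple_graph_def radius_certificate_def by blast
  then have "card L \<noteq> 0" using radius_certificate_nonempty[OF assms(1,4)] by simp
  show ?thesis
  proof (cases "x = y")
    case False
    have "dist V E x y \<noteq> 0" using dist_eq_0_imp_eq[OF assms(1-3)] False by blast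
    then have "0 < rad V E" using dist_le_twice_rad[OF assms(1-3)] by linarith
    then have "card L \<noteq> 1"
      using radius_certificate_not_singleton[OF assms(4)] by (auto simp: card_1_singleton_iff)
    with \<open>card L \<noteq> 0\<close> False show ?thesis by simp
  qed (use \<open>card L \<noteq> 0\<close> in simp)
qed

theorem proposition10:
  fixes V :: "'a set" and E :: "'a \<Rightarrow> 'a \<Rightarrow> bool" and x y :: 'a
  assumes "connected_graph V E"
    and "diam V E + 1 \<ge> 2 * rad V E"
    and "x \<in> V" and "y \<in> V"
    and "dist V E x y = diam V E"
  shows "min_radius_certificate V E {x, y} \<and> rad V E = (dist V E x y + 1) div 2"
proof
  have cert: "radius_certificate V E {x, y}"
    using radius_certificate_pair[OF assms(1,3,4)] assms(2,5) by simp
  then show "min_radius_certificate V E {x, y}"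
    unfolding min_radius_certificate_def
    using card_pair_le_radius_certificate[OF assms(1,3,4)] by blast
  show "rad V E = (dist V E x y + 1) div 2"
    using dist_le_twice_rad[OF assms(1,3,4)] assms(2,5) by linarith
qed

end
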